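(* Let $n\ge 2$, $1\le f\le n-1$ and $2\le c\le n$. Under the SSYNC scheduler with at most $f$ crash faults: (1) If $c=2$: the MAS of the $f$-fault tolerant $2$-scattering problem is $\infty$ when $f=n-1$, and is $f+2$ when $1\le f\le n-2$ (in which case the algorithm $\{sct_1,\dots,sct_{f+2}\}$ solves it). (2) If $3\le c\le n$: the MAS of the $f$-fault tolerant $c$-scattering problem is $\infty$ when $c+f-1>n$, and is $c+f-1$ when $c+f-1\le n$ (in which case the algorithm $\{sct_1,\dots,sct_{c+f-1}\}$ solves it).
   Context: Model. A swarm consists of $n\ge1$ robots $r_1,\dots,r_n$, modeled as points in $\mathbb R^2$. Each robot $r_i$ has a local right-handed $x$-$y$ coordinate system $Z_i$ whose origin is always the robot's current position, with arbitrary (adversarially chosen, fixed) unit length and axis orientation; robots do not share coordinate systems. The configuration at time $t$ is the multiset $P_t$ of the $n$ robot positions (robots can detect multiplicities). A target function $\phi$ maps each finite multiset $P$ of points of $\mathbb R^2$ with $(0,0)\in P$ to a point $\phi(P)\in\mathbb R^2$. Time is discrete, $t=0,1,2,\dots$. Under the semi-synchronous (SSYNC) scheduler, at each time $t$ an adversary chooses a set of robots to activate; each activated robot $r_i$ observes $P_t$ expressed in $Z_i$, evaluates its target function on this multiset, and moves to the resulting point (interpreted in $Z_i$), arriving before time $t+1$; non-activated robots do not move. Schedules are fair: every robot is activated infinitely often. An algorithm of size $m$ is a set $\Phi$ of $m$ distinct target functions ($m\le n$); an assignment is a surjection $\mathcal A$ from the robots onto $\Phi$, robot $r_i$ using $\mathcal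 A(r_i)$. $\Phi$ solves a problem if for every assignment, every choice of local coordinate systems, every initial configuration and every fair SSYNC schedule, the resulting execution solves the problem. The MAS of a problem is the least $m$ such that some algorithm of size $m$ solves it, and $\infty$ if no algorithm of any size $m\le n$ solves it. For a multiset $P$, $\overline P$ is its set of distinct points. Crash faults. The adversary may choose up to $f$ robots to be faulty and, for each, a time from which it crashes: from then on it never moves again (even when activated); before that it behaves correctly. "Solves under at most $f$ crashes" quantifies additionally over all such crash patterns. Problem. The $f$-fault tolerant $c$-scattering problem: starting from any initial configuration, with at most $f$ crashed robots, reach a configuration $P$ with $|\overline P|\ge c$. Algorithm. For $c'\ge1$, target functions $sct_1,\dots,sct_{c'}$ are: if $|\overline P|\ge c'$, $sct_i(P)=(0,0)$ for all $i$; if $|\overline P|=1$, $sct_1(P)=(0,0)$ and $sct_i(P)=(1,0)$ for $i\ge2$; if $2\le|\overline P|\le c'-1$, $sct_i(P)=(\delta/(2(i+1)),0)$, where $\delta$ is the minimum distance between two distinct points of $\overline P$. *)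

theory Defs
  imports Complex_Main "HOL-Library.Multiset" "HOL-Library.Extended_Nat"
begin

text \<open>Points of the plane R^2 are represented as complex numbers (x,y) = x + i y.
A target function maps a multiset of points (expressed in local coordinates) to a point.\<close>

type_synonym tfun = "complex multiset \<Rightarrow> complex"

definition config :: "nat \<Rightarrow> (nat \<Rightarrow> complex) \<Rightarrow> complex multiset" where
  "config n p = image_mset p (mset_set {..<n})"

text \<open>Local right-handed coordinate system of robot i: fixed nonzero complex a i
(unit length |a i|, orientation arg (a i)), origin at the current position.
A local point z corresponds to the global point  pos + a i * z.
Execution: A = assignment, a = coordinate systems, p0 = initial positions,
act t = robots activated at time t, F = faulty robots, ct i = crash time of robot i.\<close>
primrec exec :: "nat \<Rightarrow> (nat \<Rightarrow> tfun) \<Rightarrow> (nat \<Rightarrow> complex) \<Rightarrow> (nat \<Rightarrow> complex)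
   \<Rightarrow> (nat \<Rightarrow> nat set) \<Rightarrow> nat set \<Rightarrow> (nat \<Rightarrow> nat) \<Rightarrow> nat \<Rightarrow> nat \<Rightarrow> complex" where
  "exec n A a p0 act F ct 0 = p0"
| "exec n A a p0 act F ct (Suc t) =
     (\<lambda>i. let p = exec n A a p0 act F ct t in
       if i \<in> act t \<and> \<not> (i \<in> F \<and> ct i \<le> t)
       then p i + a i * A i (image_mset (\<lambda>q. (q - p i) / a i) (config n p))
       else p i)"

text \<open>An algorithm of size m for n robots: m distinct target functions
(distinct as functions on their domain, the multisets containing the origin), m \<le> n.\<close>
definition is_algorithm :: "nat \<Rightarrow> tfun set \<Rightarrow> nat \<Rightarrow> bool" where
  "is_algorithm n \<Phi> m \<longleftrightarrow> finite \<Phi> \<and> card \<Phi> = m \<and> 1 \<le> m \<and> m \<le> n \<and>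
     (\<forall>\<phi>\<in>\<Phi>. \<forall>\<psi>\<in>\<Phi>. \<phi> \<noteq> \<psi> \<longrightarrow> (\<exists>P. 0 \<in># P \<and> \<phi> P \<noteq> \<psi> P))"

definition solves :: "nat \<Rightarrow> nat \<Rightarrow> nat \<Rightarrow> tfun set \<Rightarrow> bool" where
  "solves n f c \<Phi> \<longleftrightarrow>
     (\<forall>A a p0 act F ct.
        A ` {..<n} = \<Phi> \<longrightarrow>
        (\<forall>i<n. a i \<noteq> 0) \<longrightarrow>
        (\<forall>i<n. infinite {t. i \<in> act t}) \<longrightarrow>
        F \<subseteq> {..<n} \<longrightarrow> card F \<le> f \<longrightarrow>
        (\<exists>t. card (set_mset (config n (exec n A a p0 act F ct t))) \<ge> c))"

definition MAS :: "nat \<Rightarrow> nat \<Rightarrow> nat \<Rightarrow> enat" where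
  "MAS n f c = (if \<exists>m \<Phi>. is_algorithm n \<Phi> m \<and> solves n f c \<Phi>
     then enat (LEAST m. \<exists>\<Phi>. is_algorithm n \<Phi> m \<and> solves n f c \<Phi>) else \<infinity>)"

definition min_dist :: "complex multiset \<Rightarrow> real" where
  "min_dist P = Min {dist p q | p q. p \<in># P \<and> q \<in># P \<and> p \<noteq> q}"

definition sct :: "nat \<Rightarrow> nat \<Rightarrow> tfun" where
  "sct c' i P =
     (if card (set_mset P) \<ge> c' then 0
      else if card (set_mset P) = 1 then (if i = 1 then 0 else 1)
      else complex_of_real (min_dist P / (2 * (real i + 1))))"

definition sct_alg :: "nat \<Rightarrow> tfun set" where
  "sct_alg c' = {sct c' i | i. 1 \<le> i \<and> i \<le> c'}"

end

theory Submission
  imports Defs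
begin

text \<open>
  The adversary uses a common frame, activates all robots at every step and crashes
  robots only at time 0. If no target function stays put on the gathered configuration, scaling
  each robot's frame makes every robot move by the same vector, so the swarm never splits.
  Otherwise some function stays put there; giving it to all but \<open>m - 1 \<le> f\<close> robots and crashing
  those keeps everybody at the origin. For \<open>c \<ge> 3\<close>, \<open>f\<close> robots crash at the origin and correct
  robots running the same function see the same view, hence stay together: at most
  \<open>1 + (m - f)\<close> points, fewer than \<open>c\<close> when \<open>m + 2 \<le> c + f\<close>.

  While there are \<open>2 \<le> k < c'\<close> distinct points, robot \<open>i\<close> moves by \<open>\<delta>/(2(i+1)) \<le> \<delta>/4\<close>, so points never merge and \<open>k\<close> never decreases; if
  \<open>c\<close> points are never reached, \<open>k\<close> becomes constant. A constant single point is impossible: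
  among the \<open>c' - 1 > f\<close> robots with index at least 2 a correct one eventually leaves the robot
  with index 1. For a constant \<open>k \<ge> 2\<close>, after the last crash a robot sharing its point with a
  correct robot must make the same nonzero step, so it is correct and runs the same function.
  Thus each point not occupied by a faulty robot carries one function, and
  \<open>c' \<le> f + (k - 1) \<le> f + c - 2\<close>, contradicting \<open>c + f \<le> c' + 1\<close>.
\<close>

section \<open>Configurations and functions determined by others\<close>

lemma set_mset_config [simp]: "set_mset (config n p) = p ` {..<n}"
  by (simp add: config_def)

lemma image_mset_config: "image_mset g (config n p) = config n (\<lambda>j. g (p j))"
  by (simp add: config_def multiset.map_comp o_def)

definition determined_on :: "'a set \<Rightarrow> ('a \<Rightarrow> 'b) \<Rightarrow> ('a \<Rightarrow> 'c) \<Rightarrow> bool" where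
  "determined_on I g f \<longleftrightarrow> (\<forall>i\<in>I. \<forall>j\<in>I. g i = g j \<longrightarrow> f i = f j)"

lemma determined_onD:
  "determined_on I g f \<Longrightarrow> i \<in> I \<Longrightarrow> j \<in> I \<Longrightarrow> g i = g j \<Longrightarrow> f i = f j"
  unfolding determined_on_def by blast

lemma determined_on_trans:
  "determined_on I g f \<Longrightarrow> determined_on I f h \<Longrightarrow> determined_on I g h"
  unfolding determined_on_def by metis

lemma determined_on_factor:
  assumes "determined_on I g f"
  obtains h where "\<And>i. i \<in> I \<Longrightarrow> f i = h (g i)"
proof
  fix i assume i: "i \<in> I"
  then have "\<exists>j. j \<in> I \<and> g j = g i" by blast
  then have "(SOME j. j \<in> I \<and> g j = g i) \<in> I \<and> g (SOME j. j \<in> I \<and> g j = g i) = g i"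
    by (rule someI_ex)
  with assms i show "f i = f (SOME j. j \<in> I \<and> g j = g i)"
    unfolding determined_on_def by metis
qed

lemma card_image_le_if_determined_on:
  assumes "finite I" "determined_on I g f"
  shows "card (f ` I) \<le> card (g ` I)"
proof -
  obtain h where "\<And>i. i \<in> I \<Longrightarrow> f i = h (g i)" using determined_on_factor[OF assms(2)] by blast
  then have "f ` I = h ` g ` I" by (force simp: image_image)
  with assms(1) show ?thesis by (simp add: card_image_le)
qed

lemma determined_on_converse_if_card_image_eq:
  assumes "finite I" "determined_on I g f" "card (f ` I) = card (g ` I)"
  shows "determined_on I f g"
proof -
  obtain h where h: "\<And>i. i \<in> I \<Longrightarrow> f i = h (g i)" using determined_on_factor[OF assms(2)] by blast
  then have "f ` I = h ` g ` I" by (force simp: image_image)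
  with assms have "inj_on h (g ` I)" by (intro eq_card_imp_inj_on) auto
  with h show ?thesis unfolding determined_on_def by (metis image_eqI inj_onD)
qed

lemma incseq_nat_bounded_eventually_const:
  fixes X :: "nat \<Rightarrow> nat"
  assumes "incseq X" "\<And>t. X t \<le> B"
  obtains T where "\<And>t. T \<le> t \<Longrightarrow> X t = X T"
proof -
  have fin: "finite (range X)" by (rule finite_subset[of _ "{..B}"]) (auto intro: assms(2))
  obtain T where T: "X T = Max (range X)" using Max_in[OF fin] by auto
  have "X t = X T" if "T \<le> t" for t
  proof (rule antisym)
    show "X t \<le> X T" unfolding T using fin by (rule Max_ge) simp
    show "X T \<le> X t" using assms(1) that by (rule incseqD)
  qed
  then show thesis by (rule that)
qed

section \<open>Minimum distance\<close>

definition min_dist_set :: "'a::metric_space set \<Rightarrow> real" where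
  "min_dist_set S = Min {dist p q | p q. p \<in> S \<and> q \<in> S \<and> p \<noteq> q}"

lemma min_dist_eq_min_dist_set: "min_dist P = min_dist_set (set_mset P)"
  by (simp add: min_dist_def min_dist_set_def)

lemma finite_dists:
  "finite S \<Longrightarrow> finite {dist p q | p q. p \<in> S \<and> q \<in> S \<and> p \<noteq> q}"
  by (rule finite_subset[of _ "(\<lambda>(p, q). dist p q) ` (S \<times> S)"]) auto

lemma two_le_card_iff:
  "finite S \<Longrightarrow> 2 \<le> card S \<longleftrightarrow> (\<exists>p\<in>S. \<exists>q\<in>S. p \<noteq> q)"
  using card_le_Suc0_iff_eq[of S] by (auto simp: not_le[symmetric])

lemma min_dist_set_pos:
  assumes "finite S" "2 \<le> card S"
  shows "0 < min_dist_set S"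
proof -
  have "{dist p q | p q. p \<in> S \<and> q \<in> S \<and> p \<noteq> q} \<noteq> {}"
    using two_le_card_iff[OF assms(1)] assms(2) by blast
  with finite_dists[OF assms(1)] show ?thesis
    unfolding min_dist_set_def by (subst Min_gr_iff) auto
qed

lemma min_dist_set_le_dist:
  "finite S \<Longrightarrow> p \<in> S \<Longrightarrow> q \<in> S \<Longrightarrow> p \<noteq> q \<Longrightarrow> min_dist_set S \<le> dist p q"
  unfolding min_dist_set_def by (rule Min_le) (auto simp: finite_dists)

lemma card_affine_image:
  fixes b :: "'a::field"
  shows "b \<noteq> 0 \<Longrightarrow> card ((\<lambda>q. (q - x) / b) ` S) = card S"
  by (rule card_image) (auto simp: inj_on_def)

lemma min_dist_set_affine_image:
  fixes b :: "'a::real_normed_field"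
  assumes "finite S" "2 \<le> card S" "b \<noteq> 0"
  shows "min_dist_set ((\<lambda>q. (q - x) / b) ` S) = min_dist_set S / norm b"
proof -
  let ?g = "\<lambda>q. (q - x) / b"
  let ?D = "{dist p q | p q. p \<in> S \<and> q \<in> S \<and> p \<noteq> q}"
  have dist_g: "dist (?g p) (?g q) = dist p q / norm b" for p q
    by (simp add: dist_norm diff_divide_distrib[symmetric] norm_divide)
  have inj_g: "?g p = ?g q \<longleftrightarrow> p = q" for p q using assms(3) by auto
  have dists_g: "{dist p q | p q. p \<in> ?g ` S \<and> q \<in> ?g ` S \<and> p \<noteq> q} = (\<lambda>d. d / norm b) ` ?D"
  proof (intro equalityI subsetI)
    fix d assume "d \<in> {dist p q | p q. p \<in> ?g ` S \<and> q \<in> ?g ` S \<and> p \<noteq> q}"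
    then show "d \<in> (\<lambda>d. d / norm b) ` ?D" using dist_g by fastforce
  next
    fix d assume "d \<in> (\<lambda>d. d / norm b) ` ?D"
    then obtain p q where "p \<in> S" "q \<in> S" "p \<noteq> q" "d = dist (?g p) (?g q)"
      by (auto simp: dist_g)
    with inj_g show "d \<in> {dist p q | p q. p \<in> ?g ` S \<and> q \<in> ?g ` S \<and> p \<noteq> q}" by blast
  qed
  have "min_dist_set (?g ` S) = Min ((\<lambda>d. d / norm b) ` ?D)"
    by (simp only: min_dist_set_def dists_g)
  also have "\<dots> = Min ?D / norm b"
  proof (rule mono_Min_commute[symmetric])
    show "mono (\<lambda>d::real. d / norm b)" by (auto intro!: monoI divide_right_mono)
    show "?D \<noteq> {}" using two_le_card_iff[OF assms(1)] assms(2) by blast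
  qed (rule finite_dists[OF assms(1)])
  finally show ?thesis by (simp only: min_dist_set_def)
qed

section \<open>The target functions \<open>sct\<close>\<close>

lemma sct_gathered: "card (set_mset P) = 1 \<Longrightarrow> 2 \<le> c' \<Longrightarrow> sct c' i P = (if i = 1 then 0 else 1)"
  by (simp add: sct_def)

lemma sct_scattered:
  "2 \<le> card (set_mset P) \<Longrightarrow> card (set_mset P) < c' \<Longrightarrow>
    sct c' i P = complex_of_real (min_dist P / (2 * (real i + 1)))"
  by (simp add: sct_def)

lemma min_dist_zero_one: "min_dist {#0, 1 :: complex#} = 1"
proof -
  have "{dist p q | p q. p \<in> {0::complex, 1} \<and> q \<in> {0, 1} \<and> p \<noteq> q} = {1}"
    by (auto simp: dist_commute) (intro exI[of _ 0] exI[of _ 1], simp)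
  then show ?thesis by (simp add: min_dist_def)
qed

lemma sct_distinct:
  assumes "3 \<le> c'" "i \<in> {1..c'}" "j \<in> {1..c'}" "i \<noteq> j"
  shows "\<exists>P. 0 \<in># P \<and> sct c' i P \<noteq> sct c' j P"
proof (cases "i = 1 \<or> j = 1")
  case True
  then have "sct c' i {#0#} \<noteq> sct c' j {#0#}" using assms by (auto simp: sct_gathered)
  then show ?thesis by (intro exI[of _ "{#0#}"]) auto
next
  case False
  have "1 / (2 * (real i + 1)) \<noteq> 1 / (2 * (real j + 1))" using assms(4) by simp
  then have "sct c' i {#0, 1#} \<noteq> sct c' j {#0, 1#}"
    using assms(1) by (simp add: sct_scattered min_dist_zero_one del: of_real_divide)
  then show ?thesis by (intro exI[of _ "{#0, 1#}"]) auto
qed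

lemma inj_on_sct: "3 \<le> c' \<Longrightarrow> inj_on (sct c') {1..c'}"
  unfolding inj_on_def using sct_distinct by fastforce

lemma sct_alg_eq_image: "sct_alg c' = sct c' ` {1..c'}"
  by (auto simp: sct_alg_def)

lemma card_sct_alg: "3 \<le> c' \<Longrightarrow> card (sct_alg c') = c'"
  unfolding sct_alg_eq_image by (subst card_image[OF inj_on_sct]) auto

lemma is_algorithm_sct_alg: "3 \<le> c' \<Longrightarrow> c' \<le> n \<Longrightarrow> is_algorithm n (sct_alg c') c'"
  unfolding is_algorithm_def using card_sct_alg[of c']
  by (auto simp: sct_alg_eq_image intro: sct_distinct)

lemma MAS_eq_enatI:
  assumes "is_algorithm n \<Phi> m" "solves n f c \<Phi>"
    and "\<And>m' \<Psi>. m' < m \<Longrightarrow> is_algorithm n \<Psi> m' \<Longrightarrow> \<not> solves n f c \<Psi>"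
  shows "MAS n f c = enat m"
proof -
  have "(LEAST m. \<exists>\<Phi>. is_algorithm n \<Phi> m \<and> solves n f c \<Phi>) = m"
    by (rule Least_equality) (use assms in \<open>auto simp: not_less[symmetric]\<close>)
  with assms show ?thesis unfolding MAS_def by auto
qed

lemma MAS_eq_infinityI:
  "(\<And>m \<Psi>. is_algorithm n \<Psi> m \<Longrightarrow> \<not> solves n f c \<Psi>) \<Longrightarrow> MAS n f c = \<infinity>"
  unfolding MAS_def by auto

section \<open>Lower bounds\<close>

lemma exec_Suc_gathered:
  assumes "exec n A a p0 act F ct t = (\<lambda>_. x)"
  shows "exec n A a p0 act F ct (Suc t) i =
    (if i \<in> act t \<and> \<not> (i \<in> F \<and> ct i \<le> t) then x + a i * A i (config n (\<lambda>_. 0)) else x)"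
  using assms by (auto simp: image_mset_config)

lemma solvesD:
  assumes "solves n f c \<Phi>" "A ` {..<n} = \<Phi>" "\<forall>i<n. a i \<noteq> 0" "\<forall>i<n. infinite {t. i \<in> act t}"
    "F \<subseteq> {..<n}" "card F \<le> f"
  shows "\<exists>t. c \<le> card (exec n A a p0 act F ct t ` {..<n})"
  using assms(1)[unfolded solves_def, THEN spec[of _ A], THEN spec[of _ a], THEN spec[of _ p0],
      THEN spec[of _ act], THEN spec[of _ F], THEN spec[of _ ct]] assms(2-6)
  by simp

lemma not_solves_if_synchronous_run_stays_small:
  assumes "A ` {..<n} = \<Phi>" "\<forall>i<n. a i \<noteq> 0" "F \<subseteq> {..<n}" "card F \<le> f"
    and "\<And>t. card (exec n A a p0 (\<lambda>_. UNIV) F ct t ` {..<n}) < c"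
  shows "\<not> solves n f c \<Phi>"
proof
  assume "solves n f c \<Phi>"
  then have "\<exists>t. c \<le> card (exec n A a p0 (\<lambda>_. UNIV) F ct t ` {..<n})"
    by (rule solvesD[OF _ assms(1,2) _ assms(3,4)]) simp
  then obtain t where "c \<le> card (exec n A a p0 (\<lambda>_. UNIV) F ct t ` {..<n})" ..
  with assms(5)[of t] show False by simp
qed

lemma assignment_with_default:
  assumes "finite \<Phi>" "card \<Phi> \<le> n" "z \<in> \<Phi>"
  obtains A where "A ` {..<n} = \<Phi>" "range A \<subseteq> \<Phi>" "\<And>i. card \<Phi> - 1 \<le> i \<Longrightarrow> A i = z"
proof -
  have "card (\<Phi> - {z}) = card \<Phi> - 1" using assms by simp
  then obtain e where e: "bij_betw e {0..<card \<Phi> - 1} (\<Phi> - {z})"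
    using ex_bij_betw_nat_finite[of "\<Phi> - {z}"] assms(1) by auto
  define A where "A i = (if i < card \<Phi> - 1 then e i else z)" for i
  have range: "range A \<subseteq> \<Phi>" using e assms(3) by (auto simp: A_def bij_betw_def)
  have "card \<Phi> \<ge> 1" using assms(1,3) card_0_eq[of \<Phi>] by fastforce
  then have "A (n - 1) = z" "n - 1 < n" using assms(2) by (auto simp: A_def)
  then have "z \<in> A ` {..<n}" by (metis image_eqI lessThan_iff)
  moreover have "\<Phi> - {z} = A ` {0..<card \<Phi> - 1}"
    using e by (simp add: bij_betw_def A_def)
  moreover have "A ` {0..<card \<Phi> - 1} \<subseteq> A ` {..<n}" using assms(2) by auto
  ultimately have "\<Phi> \<subseteq> A ` {..<n}" by auto
  with range have "A ` {..<n} = \<Phi>" by auto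
  from this range show thesis by (rule that) (simp add: A_def)
qed

lemma not_solves_if_all_leave_gathering:
  assumes "is_algorithm n \<Phi> m" "2 \<le> c" "\<forall>\<phi>\<in>\<Phi>. \<phi> (config n (\<lambda>_. 0)) \<noteq> 0"
  shows "\<not> solves n f c \<Phi>"
proof -
  from assms(1) have fin: "finite \<Phi>" "card \<Phi> = m" "1 \<le> m" "m \<le> n"
    by (auto simp: is_algorithm_def)
  then obtain z where "z \<in> \<Phi>" by fastforce
  with fin obtain A where A: "A ` {..<n} = \<Phi>" "range A \<subseteq> \<Phi>"
    by (metis assignment_with_default)
  \<comment> \<open>each frame is scaled so that the move from the gathered configuration is the global step 1\<close>
  define a where "a i = 1 / A i (config n (\<lambda>_. 0))" for i
  have a_A: "a i * A i (config n (\<lambda>_. 0)) = 1" for i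
    using A(2) assms(3) by (auto simp: a_def)
  have run: "exec n A a (\<lambda>_. 0) (\<lambda>_. UNIV) {} ct t = (\<lambda>_. of_nat t)" for ct t
  proof (induction t)
    case (Suc t)
    show ?case by (rule ext) (simp add: exec_Suc_gathered[OF Suc] a_A del: exec.simps)
  qed simp
  show ?thesis
  proof (rule not_solves_if_synchronous_run_stays_small[OF A(1)])
    show "\<forall>i<n. a i \<noteq> 0" using a_A by (metis mult_zero_left zero_neq_one)
    show "card (exec n A a (\<lambda>_. 0) (\<lambda>_. UNIV) {} (\<lambda>_. 0) t ` {..<n}) < c" for t
      using fin assms(2) by (simp add: run image_constant_conv)
  qed auto
qed

lemma not_solves_if_one_stays_gathered:
  assumes "is_algorithm n \<Phi> m" "m \<le> f + 1" "2 \<le> c" "z \<in> \<Phi>" "z (config n (\<lambda>_. 0)) = 0"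
  shows "\<not> solves n f c \<Phi>"
proof -
  from assms(1) have fin: "finite \<Phi>" "card \<Phi> = m" "1 \<le> m" "m \<le> n"
    by (auto simp: is_algorithm_def)
  with assms(4) obtain A where A: "A ` {..<n} = \<Phi>" "\<And>i. m - 1 \<le> i \<Longrightarrow> A i = z"
    by (metis assignment_with_default)
  define F where "F = {..<m - 1}"
  have correct_run_z: "A i = z" if "i \<notin> F" for i using A(2) that by (simp add: F_def)
  have run: "exec n A (\<lambda>_. 1) (\<lambda>_. 0) (\<lambda>_. UNIV) F (\<lambda>_. 0) t = (\<lambda>_. 0)" for t
  proof (induction t)
    case (Suc t)
    show ?case
      by (rule ext) (simp add: exec_Suc_gathered[OF Suc] correct_run_z assms(5) del: exec.simps)
  qed simp
  show ?thesis
  proof (rule not_solves_if_synchronous_run_stays_small[OF A(1)])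
    show "card (exec n A (\<lambda>_. 1) (\<lambda>_. 0) (\<lambda>_. UNIV) F (\<lambda>_. 0) t ` {..<n}) < c" for t
      using fin assms(3) by (simp add: run image_constant_conv)
  qed (use fin assms(2) in \<open>auto simp: F_def\<close>)
qed

lemma not_solves_if_size_le_Suc_f:
  assumes "is_algorithm n \<Phi> m" "m \<le> f + 1" "2 \<le> c"
  shows "\<not> solves n f c \<Phi>"
  using assms not_solves_if_all_leave_gathering not_solves_if_one_stays_gathered by blast

lemma synchronous_exec_invariant:
  fixes n :: nat and A :: "nat \<Rightarrow> tfun" and F :: "nat set"
  defines "p \<equiv> exec n A (\<lambda>_. 1) (\<lambda>_. 0) (\<lambda>_. UNIV) F (\<lambda>_. 0)"
  shows "(\<forall>i\<in>F. p t i = 0) \<and> determined_on (- F) A (p t)"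
proof (induction t)
  case 0
  show ?case by (simp add: p_def determined_on_def)
next
  case (Suc t)
  have step: "p (Suc t) i =
      (if i \<in> F then p t i else p t i + A i (image_mset (\<lambda>q. q - p t i) (config n (p t))))" for i
    by (simp add: p_def Let_def)
  from Suc have at_origin: "\<forall>i\<in>F. p t i = 0" and det: "determined_on (- F) A (p t)" by auto
  show ?case
  proof
    show "\<forall>i\<in>F. p (Suc t) i = 0" using at_origin by (simp add: step)
    show "determined_on (- F) A (p (Suc t))" unfolding determined_on_def
    proof (intro ballI impI)
      fix i j assume ij: "i \<in> - F" "j \<in> - F" "A i = A j"
      with det have "p t i = p t j" unfolding determined_on_def by blast
      with ij show "p (Suc t) i = p (Suc t) j" by (simp add: step)
    qed
  qed
qed

lemma card_synchronous_exec_le: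
  "card (exec n A (\<lambda>_. 1) (\<lambda>_. 0) (\<lambda>_. UNIV) {..<f} (\<lambda>_. 0) t ` {..<n}) \<le> Suc (card (A ` {f..<n}))"
proof -
  define p where "p = exec n A (\<lambda>_. 1) (\<lambda>_. 0) (\<lambda>_. UNIV) {..<f} (\<lambda>_. 0)"
  have invariant: "\<forall>i<f. p t i = 0" "determined_on (- {..<f}) A (p t)"
    using synchronous_exec_invariant[where n = n and A = A and F = "{..<f}" and t = t]
    by (simp_all add: p_def)
  have "p t ` {..<n} \<subseteq> insert 0 (p t ` {f..<n})"
  proof
    fix x assume "x \<in> p t ` {..<n}"
    then obtain i where "i < n" "x = p t i" by auto
    with invariant(1) show "x \<in> insert 0 (p t ` {f..<n})" by (cases "i < f") auto
  qed
  then have "card (p t ` {..<n}) \<le> card (insert 0 (p t ` {f..<n}))"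
    by (intro card_mono) auto
  also have "\<dots> \<le> Suc (card (p t ` {f..<n}))" by (simp add: card_insert_if)
  also have "\<dots> \<le> Suc (card (A ` {f..<n}))"
    using invariant(2) by (simp add: card_image_le_if_determined_on determined_on_def)
  finally show ?thesis by (simp add: p_def)
qed

lemma not_solves_if_size_add_2_le:
  assumes "is_algorithm n \<Phi> m" "m + 2 \<le> c + f" "3 \<le> c" "f < n"
  shows "\<not> solves n f c \<Phi>"
proof -
  from assms(1) have fin: "finite \<Phi>" "card \<Phi> = m" "1 \<le> m" "m \<le> n"
    by (auto simp: is_algorithm_def)
  then obtain z where "z \<in> \<Phi>" by fastforce
  with fin obtain A where A: "A ` {..<n} = \<Phi>" "\<And>i. m - 1 \<le> i \<Longrightarrow> A i = z"
    by (metis assignment_with_default)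
  have "A i \<in> insert z (A ` {f..<m - 1})" if "i \<in> {f..<n}" for i
    using that A(2)[of i] by (cases "i < m - 1") auto
  then have "card (A ` {f..<n}) \<le> card (insert z (A ` {f..<m - 1}))"
    by (simp add: card_mono image_subset_iff)
  also have "\<dots> \<le> Suc (card (A ` {f..<m - 1}))" by (simp add: card_insert_if)
  also have "\<dots> \<le> Suc (m - 1 - f)" using card_image_le[of "{f..<m - 1}" A] by simp
  finally have few: "Suc (card (A ` {f..<n})) < c" using assms(2,3) by linarith
  show ?thesis
  proof (rule not_solves_if_synchronous_run_stays_small[OF A(1)])
    show "card (exec n A (\<lambda>_. 1) (\<lambda>_. 0) (\<lambda>_. UNIV) {..<f} (\<lambda>_. 0) t ` {..<n}) < c" for t
      using card_synchronous_exec_le[of n A f t] few by linarith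
  qed (use assms(4) in auto)
qed

section \<open>Correctness of \<open>sct\<close>\<close>

locale sct_execution =
  fixes n c' :: nat and A :: "nat \<Rightarrow> tfun" and a :: "nat \<Rightarrow> complex"
    and p0 :: "nat \<Rightarrow> complex" and act :: "nat \<Rightarrow> nat set" and F :: "nat set"
    and ct :: "nat \<Rightarrow> nat"
  assumes n_pos: "1 \<le> n" and size_ge_3: "3 \<le> c'"
    and assignment: "A ` {..<n} = sct_alg c'"
    and units_nonzero: "\<forall>i<n. a i \<noteq> 0"
    and fair: "\<forall>i<n. infinite {t. i \<in> act t}"
    and faulty_robots: "F \<subseteq> {..<n}"
begin

definition pos :: "nat \<Rightarrow> nat \<Rightarrow> complex" where
  "pos t = exec n A a p0 act F ct t"

definition points :: "nat \<Rightarrow> complex set" where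
  "points t = pos t ` {..<n}"

definition gap :: "nat \<Rightarrow> real" where
  "gap t = min_dist_set (points t)"

definition moves :: "nat \<Rightarrow> nat \<Rightarrow> bool" where
  "moves t i \<longleftrightarrow> i \<in> act t \<and> \<not> (i \<in> F \<and> ct i \<le> t)"

definition idx :: "nat \<Rightarrow> nat" where
  "idx i = (SOME k. k \<in> {1..c'} \<and> A i = sct c' k)"

lemma idx_spec: "i < n \<Longrightarrow> idx i \<in> {1..c'} \<and> A i = sct c' (idx i)"
proof -
  assume "i < n"
  then have "A i \<in> sct c' ` {1..c'}"
    using assignment by (auto simp: sct_alg_eq_image)
  then have "\<exists>k. k \<in> {1..c'} \<and> A i = sct c' k" by blast
  then show ?thesis unfolding idx_def by (rule someI_ex)
qed

lemma idx_surj: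
  assumes "k \<in> {1..c'}"
  obtains i where "i < n" "idx i = k"
proof -
  obtain i where i: "i < n" "A i = sct c' k"
    using assms assignment by (force simp: sct_alg_eq_image)
  with idx_spec[OF i(1)] assms have "idx i = k" using inj_onD[OF inj_on_sct[OF size_ge_3]] by metis
  with i(1) show thesis by (rule that)
qed

lemma finite_points [simp]: "finite (points t)"
  by (simp add: points_def)

lemma card_points_pos: "1 \<le> card (points t)"
  using n_pos by (auto simp: points_def Suc_le_eq card_gt_0_iff)

lemma card_points_le: "card (points t) \<le> n"
  unfolding points_def using card_image_le[of "{..<n}" "pos t"] by simp

lemma pos_Suc:
  "pos (Suc t) i =
    (if moves t i then pos t i + a i * A i (config n (\<lambda>j. (pos t j - pos t i) / a i)) else pos t i)"
  by (auto simp: pos_def moves_def Let_def image_mset_config)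

lemma local_view:
  assumes "i < n"
  shows "card (set_mset (config n (\<lambda>j. (pos t j - pos t i) / a i))) = card (points t)"
    and "2 \<le> card (points t) \<Longrightarrow>
      min_dist (config n (\<lambda>j. (pos t j - pos t i) / a i)) = gap t / norm (a i)"
proof -
  have view: "set_mset (config n (\<lambda>j. (pos t j - pos t i) / a i)) = (\<lambda>q. (q - pos t i) / a i) ` points t"
    by (simp add: points_def image_image)
  have "a i \<noteq> 0" using units_nonzero assms by simp
  then show "card (set_mset (config n (\<lambda>j. (pos t j - pos t i) / a i))) = card (points t)"
    and "2 \<le> card (points t) \<Longrightarrow>
      min_dist (config n (\<lambda>j. (pos t j - pos t i) / a i)) = gap t / norm (a i)"
    unfolding view min_dist_eq_min_dist_set gap_def
    by (simp_all add: card_affine_image min_dist_set_affine_image)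
qed

lemma pos_Suc_gathered:
  assumes "card (points t) = 1" "i < n"
  shows "pos (Suc t) i = (if moves t i \<and> 2 \<le> idx i then pos t i + a i else pos t i)"
  using idx_spec[OF assms(2)] local_view(1)[OF assms(2), of t] assms(1) size_ge_3
  by (auto simp: pos_Suc sct_gathered)

lemma gap_pos: "2 \<le> card (points t) \<Longrightarrow> 0 < gap t"
  by (simp add: gap_def min_dist_set_pos)

lemma dist_pos_Suc:
  assumes "2 \<le> card (points t)" "card (points t) < c'" "i < n"
  shows "dist (pos (Suc t) i) (pos t i) = (if moves t i then gap t / (2 * (real (idx i) + 1)) else 0)"
proof -
  have "a i \<noteq> 0" using units_nonzero assms(3) by simp
  define r where "r = gap t / norm (a i) / (2 * (real (idx i) + 1))"
  have target: "A i (config n (\<lambda>j. (pos t j - pos t i) / a i)) = complex_of_real r"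
    using idx_spec[OF assms(3)] local_view[OF assms(3), of t] assms(1,2) by (simp add: sct_scattered r_def)
  have "0 \<le> r" using gap_pos[OF assms(1)] by (simp add: r_def)
  then have "norm (a i * complex_of_real r) = norm (a i) * r"
    by (simp only: norm_mult norm_of_real abs_of_nonneg)
  also have "\<dots> = gap t / (2 * (real (idx i) + 1))"
    using \<open>a i \<noteq> 0\<close> by (simp add: r_def)
  finally have displacement: "norm (a i * complex_of_real r) = gap t / (2 * (real (idx i) + 1))" .
  show ?thesis by (simp add: pos_Suc dist_norm target displacement del: norm_mult)
qed

lemma dist_pos_Suc_le:
  assumes "2 \<le> card (points t)" "card (points t) < c'" "i < n"
  shows "dist (pos (Suc t) i) (pos t i) \<le> gap t / 4"
proof -
  have "4 \<le> 2 * (real (idx i) + 1)" using idx_spec[OF assms(3)] by simp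
  then have "gap t / (2 * (real (idx i) + 1)) \<le> gap t / 4"
    using gap_pos[OF assms(1)] by (intro divide_left_mono) auto
  then show ?thesis using dist_pos_Suc[OF assms] gap_pos[OF assms(1)] by auto
qed

lemma no_merging:
  assumes "2 \<le> card (points t)" "card (points t) < c'"
  shows "determined_on {..<n} (pos (Suc t)) (pos t)"
  unfolding determined_on_def
proof (intro ballI impI)
  fix i j assume ij: "i \<in> {..<n}" "j \<in> {..<n}" "pos (Suc t) i = pos (Suc t) j"
  show "pos t i = pos t j"
  proof (rule ccontr)
    assume "pos t i \<noteq> pos t j"
    with ij have "gap t \<le> dist (pos t i) (pos t j)"
      unfolding gap_def points_def by (intro min_dist_set_le_dist) auto
    also have "\<dots> \<le> dist (pos (Suc t) i) (pos t i) + dist (pos (Suc t) j) (pos t j)"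
      using ij(3) by (metis dist_commute dist_triangle)
    also have "\<dots> \<le> gap t / 4 + gap t / 4"
      using dist_pos_Suc_le[OF assms, of i] dist_pos_Suc_le[OF assms, of j] ij(1,2) by simp
    finally show False using gap_pos[OF assms(1)] by simp
  qed
qed

lemma card_points_Suc_ge:
  assumes "card (points t) < c'"
  shows "card (points t) \<le> card (points (Suc t))"
proof (cases "card (points t) = 1")
  case True
  then show ?thesis using card_points_pos[of "Suc t"] by simp
next
  case False
  with card_points_pos[of t] have "2 \<le> card (points t)" by simp
  from no_merging[OF this assms] show ?thesis
    unfolding points_def by (rule card_image_le_if_determined_on[OF finite_lessThan])
qed

lemma no_splitting:
  assumes "2 \<le> card (points t)" "card (points t) < c'" "card (points (Suc t)) = card (points t)"
  shows "determined_on {..<n} (pos t) (pos (Suc t))"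
  using finite_lessThan no_merging[OF assms(1,2)] assms(3)[symmetric]
  unfolding points_def by (rule determined_on_converse_if_card_image_eq)

lemma card_points_eventually_const:
  assumes "\<And>t. card (points t) < c'"
  obtains T where "\<And>t. T \<le> t \<Longrightarrow> card (points t) = card (points T)"
proof -
  have "incseq (\<lambda>t. card (points t))"
    by (rule incseq_SucI) (rule card_points_Suc_ge[OF assms])
  from incseq_nat_bounded_eventually_const[OF this card_points_le] that show thesis .
qed

lemma activated_after:
  assumes "i < n"
  obtains t where "t\<^sub>0 \<le> t" "i \<in> act t"
proof -
  have "infinite {t. i \<in> act t}" using fair assms by simp
  with that show thesis unfolding infinite_nat_iff_unbounded_le by blast
qed

lemma gathered_scatters:
  assumes "card (points t) = 1" "r < n" "moves t r" "2 \<le> idx r"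
  shows "2 \<le> card (points (Suc t))"
proof -
  obtain s where s: "s < n" "idx s = 1" using idx_surj[of 1] size_ge_3 by auto
  obtain x where "points t = {x}" using assms(1) by (auto simp: card_1_singleton_iff)
  then have "pos t r = pos t s"
    using assms(2) s(1) unfolding points_def by (metis image_eqI lessThan_iff singletonD)
  moreover have "pos (Suc t) r = pos t r + a r" "pos (Suc t) s = pos t s"
    using pos_Suc_gathered[OF assms(1)] assms(2-4) s by auto
  moreover have "a r \<noteq> 0" using units_nonzero assms(2) by simp
  ultimately have "pos (Suc t) r \<noteq> pos (Suc t) s" by simp
  with assms(2) s(1) show ?thesis
    unfolding points_def by (subst two_le_card_iff) auto
qed

lemma gathered_forever_imp_card_faulty:
  assumes "\<And>t. T \<le> t \<Longrightarrow> card (points t) = 1"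
  shows "c' \<le> card F + 1"
proof -
  define R where "R = {i. i < n \<and> 2 \<le> idx i}"
  have "{2..c'} \<subseteq> idx ` R"
  proof
    fix k assume "k \<in> {2..c'}"
    then obtain i where "i < n" "idx i = k" using idx_surj[of k] by auto
    with \<open>k \<in> {2..c'}\<close> show "k \<in> idx ` R" by (auto simp: R_def)
  qed
  then have "c' - 1 \<le> card R"
    using card_mono[OF _ \<open>{2..c'} \<subseteq> idx ` R\<close>] card_image_le[of R idx] by (simp add: R_def)
  moreover have "R \<subseteq> F"
  proof
    fix r assume r: "r \<in> R"
    show "r \<in> F"
    proof (rule ccontr)
      assume "r \<notin> F"
      from r have "r < n" by (simp add: R_def)
      then obtain t where "T \<le> t" "r \<in> act t" by (rule activated_after)
      with \<open>r \<notin> F\<close> have "moves t r" by (simp add: moves_def)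
      with r assms[of t] \<open>T \<le> t\<close> have "2 \<le> card (points (Suc t))"
        by (intro gathered_scatters) (auto simp: R_def)
      with assms[of "Suc t"] \<open>T \<le> t\<close> show False by simp
    qed
  qed
  then have "card R \<le> card F"
    using faulty_robots by (intro card_mono) (auto intro: finite_subset)
  ultimately show ?thesis by linarith
qed

lemma colocated_stay_colocated:
  assumes "\<And>t. T \<le> t \<Longrightarrow> card (points t) = k" "2 \<le> k" "k < c'" "T \<le> t"
  shows "determined_on {..<n} (pos t) (pos (t + d))"
proof (induction d)
  case 0
  show ?case by (simp add: determined_on_def)
next
  case (Suc d)
  have "determined_on {..<n} (pos (t + d)) (pos (Suc (t + d)))"
    using assms by (intro no_splitting) auto
  with Suc.IH show ?case by (simp add: determined_on_trans)
qed

lemma colocated_with_correct_robot: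
  assumes stable: "\<And>t. T \<le> t \<Longrightarrow> card (points t) = k" "2 \<le> k" "k < c'"
    and "T \<le> t\<^sub>0" "\<forall>i\<in>F. ct i \<le> t\<^sub>0"
    and r: "r < n" "r \<notin> F" and s: "s < n" "pos t\<^sub>0 r = pos t\<^sub>0 s"
  shows "s \<notin> F \<and> idx s = idx r"
proof -
  obtain t where t: "t\<^sub>0 \<le> t" "r \<in> act t" by (rule activated_after[OF r(1)])
  have together: "pos (t\<^sub>0 + d) r = pos (t\<^sub>0 + d) s" for d
    by (rule determined_onD[OF colocated_stay_colocated[OF stable \<open>T \<le> t\<^sub>0\<close>]])
      (use r(1) s in auto)
  obtain d where "t = t\<^sub>0 + d" using t(1) le_Suc_ex by blast
  then have "pos t r = pos t s" "pos (Suc t) r = pos (Suc t) s"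
    using together[of d] together[of "Suc d"] by simp_all
  then have same_step: "dist (pos (Suc t) s) (pos t s) = dist (pos (Suc t) r) (pos t r)" by simp
  have card_t: "2 \<le> card (points t)" "card (points t) < c'" using stable \<open>T \<le> t\<^sub>0\<close> t(1) by auto
  have "moves t r" using t(2) r(2) by (simp add: moves_def)
  then have step_r: "dist (pos (Suc t) r) (pos t r) = gap t / (2 * (real (idx r) + 1))"
    using dist_pos_Suc[OF card_t r(1)] by simp
  \<comment> \<open>\<open>s\<close> stays with \<open>r\<close>, hence makes the same nonzero step\<close>
  have "moves t s"
  proof (rule ccontr)
    assume "\<not> moves t s"
    then have "dist (pos (Suc t) s) (pos t s) = 0" using dist_pos_Suc[OF card_t s(1)] by simp
    with same_step step_r gap_pos[OF card_t(1)] show False by simp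
  qed
  then have "s \<notin> F" using assms(5) t(1) by (auto simp: moves_def)
  moreover have "gap t / (2 * (real (idx s) + 1)) = gap t / (2 * (real (idx r) + 1))"
    using same_step step_r dist_pos_Suc[OF card_t s(1)] \<open>moves t s\<close> by simp
  then have "idx s = idx r" using gap_pos[OF card_t(1)] by (simp add: field_simps)
  ultimately show ?thesis by simp
qed

lemma card_functions_of_correct_le:
  assumes stable: "\<And>t. T \<le> t \<Longrightarrow> card (points t) = k" "2 \<le> k" "k < c'"
    and "T \<le> t\<^sub>0" "\<forall>i\<in>F. ct i \<le> t\<^sub>0"
  shows "card (A ` ({..<n} - F)) \<le> card (points t\<^sub>0 - pos t\<^sub>0 ` F)"
proof -
  have colocated: "s \<notin> F \<and> idx s = idx r"
    if "r < n" "r \<notin> F" "s < n" "pos t\<^sub>0 r = pos t\<^sub>0 s" for r s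
    using assms that by (rule colocated_with_correct_robot)
  let ?G = "{..<n} - F"
  have "determined_on ?G (pos t\<^sub>0) A"
    unfolding determined_on_def
  proof (intro ballI impI)
    fix r s assume rs: "r \<in> ?G" "s \<in> ?G" "pos t\<^sub>0 r = pos t\<^sub>0 s"
    then have "s \<notin> F \<and> idx s = idx r" by (intro colocated) auto
    with rs(1,2) idx_spec[of r] idx_spec[of s] show "A r = A s" by simp
  qed
  then have "card (A ` ?G) \<le> card (pos t\<^sub>0 ` ?G)"
    by (intro card_image_le_if_determined_on) auto
  also have "pos t\<^sub>0 ` ?G \<subseteq> points t\<^sub>0 - pos t\<^sub>0 ` F"
  proof
    fix x assume "x \<in> pos t\<^sub>0 ` ?G"
    then obtain r where r: "r < n" "r \<notin> F" "x = pos t\<^sub>0 r" by auto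
    have "x \<notin> pos t\<^sub>0 ` F"
    proof
      assume "x \<in> pos t\<^sub>0 ` F"
      then obtain s where s: "s \<in> F" "pos t\<^sub>0 r = pos t\<^sub>0 s" using r(3) by auto
      with faulty_robots have "s < n" by auto
      from colocated[OF r(1,2) this s(2)] s(1) show False by simp
    qed
    with r show "x \<in> points t\<^sub>0 - pos t\<^sub>0 ` F" by (auto simp: points_def)
  qed
  then have "card (pos t\<^sub>0 ` ?G) \<le> card (points t\<^sub>0 - pos t\<^sub>0 ` F)"
    by (intro card_mono) auto
  finally show ?thesis .
qed

lemma scattered_forever_imp_card_faulty:
  assumes stable: "\<And>t. T \<le> t \<Longrightarrow> card (points t) = k" "2 \<le> k" "k < c'"
  shows "c' + 1 \<le> card F + k"
proof -
  have finF: "finite F" using faulty_robots by (rule finite_subset) simp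
  define t\<^sub>0 where "t\<^sub>0 = T + sum ct F"
  have "T \<le> t\<^sub>0" by (simp add: t\<^sub>0_def)
  moreover have "\<forall>i\<in>F. ct i \<le> t\<^sub>0"
    using member_le_sum[of _ F ct] finF by (auto simp: t\<^sub>0_def intro: trans_le_add2)
  ultimately have correct: "card (A ` ({..<n} - F)) \<le> card (points t\<^sub>0 - pos t\<^sub>0 ` F)"
    using stable by (intro card_functions_of_correct_le)
  have "c' = card (A ` {..<n})" using assignment card_sct_alg[OF size_ge_3] by simp
  also have "A ` {..<n} = A ` F \<union> A ` ({..<n} - F)" using faulty_robots by auto
  also have "card \<dots> \<le> card F + card (points t\<^sub>0 - pos t\<^sub>0 ` F)"
    using card_Un_le[of "A ` F" "A ` ({..<n} - F)"] card_image_le[OF finF, of A] correct by linarith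
  finally have bound: "c' \<le> card F + card (points t\<^sub>0 - pos t\<^sub>0 ` F)" .
  have card_t0: "card (points t\<^sub>0) = k" using stable by (simp add: t\<^sub>0_def)
  have "F \<noteq> {}"
  proof
    assume "F = {}"
    with bound card_t0 stable(3) show False by simp
  qed
  with finF have "1 \<le> card (pos t\<^sub>0 ` F)" by (simp add: Suc_le_eq card_gt_0_iff)
  moreover have "pos t\<^sub>0 ` F \<subseteq> points t\<^sub>0" using faulty_robots by (auto simp: points_def)
  then have "card (points t\<^sub>0 - pos t\<^sub>0 ` F) = k - card (pos t\<^sub>0 ` F)"
    by (simp add: card_Diff_subset finite_subset card_t0)
  ultimately show ?thesis using bound stable(2) by linarith
qed

lemma eventually_scattered:
  assumes "c \<le> c'" "card F \<le> f" "f + 2 \<le> c'" "c + f \<le> c' + 1"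
  shows "\<exists>t. c \<le> card (points t)"
proof (rule ccontr)
  assume "\<nexists>t. c \<le> card (points t)"
  then have below_c: "card (points t) < c" for t by (simp add: not_le)
  with assms(1) have below_c': "card (points t) < c'" for t using order_less_le_trans by blast
  obtain T where T: "\<And>t. T \<le> t \<Longrightarrow> card (points t) = card (points T)"
    using card_points_eventually_const[OF below_c'] by blast
  show False
  proof (cases "card (points T) = 1")
    case True
    with T have "c' \<le> card F + 1" by (intro gathered_forever_imp_card_faulty[of T]) simp
    with assms(2,3) show False by linarith
  next
    case False
    with card_points_pos[of T] have "2 \<le> card (points T)" by simp
    from T this below_c'[of T] have "c' + 1 \<le> card F + card (points T)"
      by (rule scattered_forever_imp_card_faulty)
    with below_c[of T] assms(2,4) show False by linarith
  qed
qed

end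

lemma solves_sct_alg:
  assumes "1 \<le> n" "3 \<le> c'" "c \<le> c'" "f + 2 \<le> c'" "c + f \<le> c' + 1"
  shows "solves n f c (sct_alg c')"
  unfolding solves_def
proof (intro allI impI)
  fix A :: "nat \<Rightarrow> tfun" and a p0 :: "nat \<Rightarrow> complex" and act :: "nat \<Rightarrow> nat set"
    and F :: "nat set" and ct :: "nat \<Rightarrow> nat"
  assume "A ` {..<n} = sct_alg c'" "\<forall>i<n. a i \<noteq> 0" "\<forall>i<n. infinite {t. i \<in> act t}"
    "F \<subseteq> {..<n}" "card F \<le> f"
  then interpret sct_execution n c' A a p0 act F ct
    using assms by unfold_locales auto
  from eventually_scattered[OF assms(3) \<open>card F \<le> f\<close> assms(4,5)]
  show "\<exists>t. c \<le> card (set_mset (config n (exec n A a p0 act F ct t)))"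
    by (simp add: points_def pos_def)
qed

theorem mainTheorem9:
  fixes n f c :: nat
  assumes "n \<ge> 2" and "1 \<le> f" and "f \<le> n - 1" and "2 \<le> c" and "c \<le> n"
  shows "(c = 2 \<longrightarrow>
            (f = n - 1 \<longrightarrow> MAS n f c = \<infinity>) \<and>
            (f \<le> n - 2 \<longrightarrow> MAS n f c = enat (f + 2) \<and>
               is_algorithm n (sct_alg (f + 2)) (f + 2) \<and> solves n f c (sct_alg (f + 2))))
       \<and> (3 \<le> c \<longrightarrow>
            (c + f - 1 > n \<longrightarrow> MAS n f c = \<infinity>) \<and>
            (c + f - 1 \<le> n \<longrightarrow> MAS n f c = enat (c + f - 1) \<and>
               is_algorithm n (sct_alg (c + f - 1)) (c + f - 1) \<and>
               solves n f c (sct_alg (c + f - 1))))"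
proof (intro conjI impI)
  have size_le: "m \<le> n" if "is_algorithm n \<Psi> m" for m \<Psi> using that by (simp add: is_algorithm_def)
  show "MAS n f c = \<infinity>" if "c = 2" "f = n - 1"
    using that assms size_le by (intro MAS_eq_infinityI not_solves_if_size_le_Suc_f) force+
  show alg2: "is_algorithm n (sct_alg (f + 2)) (f + 2)" and sol2: "solves n f c (sct_alg (f + 2))"
    if "c = 2" "f \<le> n - 2"
    using that assms by (auto intro: is_algorithm_sct_alg solves_sct_alg)
  show "MAS n f c = enat (f + 2)" if "c = 2" "f \<le> n - 2"
    using alg2[OF that] sol2[OF that] that assms
    by (intro MAS_eq_enatI not_solves_if_size_le_Suc_f) auto
  show "MAS n f c = \<infinity>" if "3 \<le> c" "c + f - 1 > n"
    using that assms size_le by (intro MAS_eq_infinityI not_solves_if_size_add_2_le) force+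
  show alg3: "is_algorithm n (sct_alg (c + f - 1)) (c + f - 1)"
    and sol3: "solves n f c (sct_alg (c + f - 1))" if "3 \<le> c" "c + f - 1 \<le> n"
    using that assms by (auto intro: is_algorithm_sct_alg solves_sct_alg)
  show "MAS n f c = enat (c + f - 1)" if "3 \<le> c" "c + f - 1 \<le> n"
    using alg3[OF that] sol3[OF that] that assms
    by (intro MAS_eq_enatI not_solves_if_size_add_2_le) auto
qed

end
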